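(* Consider the $N$-node uplink system described in the context, initialized with $d_{0,i}=D_{0,i}=1$ for all $i$ (so the AP's initial belief of each local age is the point mass at $1$), and operated under an arbitrary scheduling policy. Then for every slot $t\ge 1$ and every node $i$ there exist positive integers $k,m$ such that $D_{t,i}=k+m$ and the AP's belief $\bm{b}_{t,i}$ of the local age of node $i$ equals $\bm{c}_i(k,m)$, where $\bm{c}_i(k,m)=[c(d)]_{d\ge1}$ is defined by $c(d)=\lambda_i(1-\lambda_i)^{d-1}$ for $1\le d\le m$, $c(k+m)=(1-\lambda_i)^m$, and $c(d)=0$ for all other $d\ge 1$.
   Context: System: $N$ nodes $i=1,\dots,N$ and one access point (AP); time slots $t=0,1,2,\dots$. Node $i$ receives a status update in each slot independently with probability $\lambda_i\in(0,1]$ (independent across nodes and slots) and keeps only the latest one. Local age: $d_{t+1,i}=1$ if an update arrives at node $i$ in slot $t$, else $d_{t+1,i}=d_{t,i}+1$. In each slot the AP schedules at most one node; a scheduled node $i$'s transmission succeeds with probability $p_i\in(0,1]$ independently. If node $i$ is scheduled and succeeds in slot $t$, the AP observes $d_{t,i}$ and $D_{t+1,i}=d_{t,i}+1$; otherwise the AP observes nothing about $d_{t,i}$ and $D_{t+1,i}=D_{t,i}+1$. A scheduling policy chooses the action in each slot as a function of the AP's past actions and observations. The belief $\bm{b}_{t,i}=[b_{t,i}(d)]_{d\ge1}$ is the conditional distribution $b_{t,i}(d)=\Pr(d_{t,i}=d\mid \text{AP history of actions and observations up to slot } t-1)$; $D_{t,i}$ is known to the AP. *)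

theory Defs
  imports Complex_Main "HOL-Library.FuncSet"
begin

text \<open>A configuration w assigns to each (slot s, node i) a pair
  (arrival bit, success bit): fst (w (s,i)) = an update arrives at node i in slot s
  (prob lam i), snd (w (s,i)) = a transmission of node i in slot s would succeed (prob p i). Histories are lists of (action, observation) pairs; an action is
  None (idle) or Some j (schedule node j); an observation is None or Some (local age).\<close>

type_synonym config = "nat \<times> nat \<Rightarrow> bool \<times> bool"
type_synonym history = "(nat option \<times> nat option) list"
type_synonym policy = "history \<Rightarrow> nat option"

fun dloc :: "config \<Rightarrow> nat \<Rightarrow> nat \<Rightarrow> nat" where
  "dloc w i 0 = 1"
| "dloc w i (Suc s) = (if fst (w (s, i)) then 1 else Suc (dloc w i s))"

fun hist :: "policy \<Rightarrow> config \<Rightarrow> nat \<Rightarrow> history" where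
  "hist pol w 0 = []"
| "hist pol w (Suc s) =
     (let u = pol (hist pol w s) in
        hist pol w s @ [(u, case u of None \<Rightarrow> None
                                   | Some j \<Rightarrow> (if snd (w (s, j)) then Some (dloc w j s) else None))])"

fun Dap :: "policy \<Rightarrow> config \<Rightarrow> nat \<Rightarrow> nat \<Rightarrow> nat" where
  "Dap pol w i 0 = 1"
| "Dap pol w i (Suc s) =
     (if pol (hist pol w s) = Some i \<and> snd (w (s, i)) then Suc (dloc w i s)
      else Suc (Dap pol w i s))"

definition omega :: "nat \<Rightarrow> nat \<Rightarrow> config set" where
  "omega N t = PiE ({..<t} \<times> {1..N}) (\<lambda>_. UNIV)"

definition weight :: "nat \<Rightarrow> (nat \<Rightarrow> real) \<Rightarrow> (nat \<Rightarrow> real) \<Rightarrow> nat \<Rightarrow> config \<Rightarrow> real" where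
  "weight N lam p t w =
     (\<Prod>s<t. \<Prod>i\<in>{1..N}. (if fst (w (s, i)) then lam i else 1 - lam i)
                          * (if snd (w (s, i)) then p i else 1 - p i))"

definition prob_ev :: "nat \<Rightarrow> (nat \<Rightarrow> real) \<Rightarrow> (nat \<Rightarrow> real) \<Rightarrow> nat \<Rightarrow> (config \<Rightarrow> bool) \<Rightarrow> real" where
  "prob_ev N lam p t E = (\<Sum>w\<in>omega N t. if E w then weight N lam p t w else 0)"

definition belief :: "nat \<Rightarrow> (nat \<Rightarrow> real) \<Rightarrow> (nat \<Rightarrow> real) \<Rightarrow> policy \<Rightarrow> nat \<Rightarrow> nat \<Rightarrow> history \<Rightarrow> nat \<Rightarrow> real" where
  "belief N lam p pol t i h d =
     prob_ev N lam p t (\<lambda>w. dloc w i t = d \<and> hist pol w t = h)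
     / prob_ev N lam p t (\<lambda>w. hist pol w t = h)"

definition cvec :: "(nat \<Rightarrow> real) \<Rightarrow> nat \<Rightarrow> nat \<Rightarrow> nat \<Rightarrow> nat \<Rightarrow> real" where
  "cvec lam i k m d =
     (if 1 \<le> d \<and> d \<le> m then lam i * (1 - lam i) ^ (d - 1)
      else if d = k + m then (1 - lam i) ^ m else 0)"

end

theory Submission
  imports Defs
begin

text \<open>After slot t the AP knows, from its history alone, the local age k of node i at the
  last successful observation of node i (or k = 1 at time 0) and the number m of slots since then.
  The arrivals at node i during these m slots are independent of everything the AP has seen, so
  the local age is d \<le> m with probability lam (1 - lam)^(d-1) (the last arrival was d slots
  ago), and k + m if there was none. Formally, one proves by induction on t that
  P(d_t = d, history = h, Q) = c(k, m)(d) P(history = h, Q) for every event Q about the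
  other nodes' ages; each step conditions on the bits of the last slot, where the arrival bit of
  node i either resets the age or shifts the previous belief by one.\<close>

section \<open>Conditioning on the last slot\<close>

lemma sum_PiE_remove:
  fixes f :: "'a \<Rightarrow> 'b \<Rightarrow> 'c :: comm_semiring_1"
  assumes "i \<in> A" "finite A"
  shows "(\<Sum>v\<in>A \<rightarrow>\<^sub>E B. (\<Prod>j\<in>A. f j (v j)) * F v) =
    (\<Sum>v\<in>(A - {i}) \<rightarrow>\<^sub>E B. (\<Prod>j\<in>A - {i}. f j (v j)) * (\<Sum>b\<in>B. f i b * F (v(i := b))))"
proof -
  have split_PiE: "A \<rightarrow>\<^sub>E B = (\<lambda>(b, v). v(i := b)) ` (B \<times> ((A - {i}) \<rightarrow>\<^sub>E B))"
    using PiE_insert_eq[of i "A - {i}" "\<lambda>_. B"] assms(1) by (simp add: insert_absorb)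
  have remove_i: "(\<Prod>j\<in>A. f j ((v(i := b)) j)) = f i b * (\<Prod>j\<in>A - {i}. f j (v j))" for b v
  proof -
    have "(\<Prod>j\<in>A. f j ((v(i := b)) j)) =
        f i ((v(i := b)) i) * (\<Prod>j\<in>A - {i}. f j ((v(i := b)) j))"
      by (rule prod.remove[OF assms(2,1)])
    also have "(\<Prod>j\<in>A - {i}. f j ((v(i := b)) j)) = (\<Prod>j\<in>A - {i}. f j (v j))"
      by (rule prod.cong) auto
    finally show ?thesis
      by simp
  qed
  have "(\<Sum>v\<in>A \<rightarrow>\<^sub>E B. (\<Prod>j\<in>A. f j (v j)) * F v) =
      (\<Sum>(b, v)\<in>B \<times> ((A - {i}) \<rightarrow>\<^sub>E B). (\<Prod>j\<in>A. f j ((v(i := b)) j)) * F (v(i := b)))"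
    unfolding split_PiE
    by (subst sum.reindex[OF inj_combinator]) (simp_all only: comp_def case_prod_unfold, simp)
  also have "\<dots> = (\<Sum>(b, v)\<in>B \<times> ((A - {i}) \<rightarrow>\<^sub>E B). f i b * (\<Prod>j\<in>A - {i}. f j (v j)) * F (v(i := b)))"
    by (simp only: remove_i)
  finally show ?thesis
    by (simp add: sum.cartesian_product[symmetric] sum_distrib_left mult_ac sum.swap[of _ B])
qed

definition node_weight :: "(nat \<Rightarrow> real) \<Rightarrow> (nat \<Rightarrow> real) \<Rightarrow> nat \<Rightarrow> bool \<times> bool \<Rightarrow> real" where
  "node_weight lam p j ab =
     (if fst ab then lam j else 1 - lam j) * (if snd ab then p j else 1 - p j)"

lemma node_weight_sum:
  "(\<Sum>ab\<in>UNIV. node_weight lam p j ab * (f (fst ab) * g (snd ab))) =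
     (lam j * f True + (1 - lam j) * f False) * (p j * g True + (1 - p j) * g False)"
proof -
  have bool_pairs: "(UNIV :: (bool \<times> bool) set) = {True, False} \<times> {True, False}"
    by auto
  show ?thesis
    unfolding bool_pairs by (simp add: node_weight_def algebra_simps)
qed

definition extend_config :: "nat \<Rightarrow> config \<Rightarrow> (nat \<Rightarrow> bool \<times> bool) \<Rightarrow> config" where
  "extend_config t w v = (\<lambda>(s, j). if s = t then v j else w (s, j))"

lemma weight_eq_prod_node_weight:
  "weight N lam p t w = (\<Prod>s<t. \<Prod>j\<in>{1..N}. node_weight lam p j (w (s, j)))"
  by (simp add: weight_def node_weight_def)

lemma weight_extend_config:
  "weight N lam p (Suc t) (extend_config t w v) =
     weight N lam p t w * (\<Prod>j\<in>{1..N}. node_weight lam p j (v j))"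
proof -
  have "(\<Prod>s<t. \<Prod>j\<in>{1..N}. node_weight lam p j (extend_config t w v (s, j))) =
      (\<Prod>s<t. \<Prod>j\<in>{1..N}. node_weight lam p j (w (s, j)))"
    by (rule prod.cong) (auto simp: extend_config_def)
  then show ?thesis
    by (simp add: weight_eq_prod_node_weight prod.lessThan_Suc extend_config_def)
qed

lemma prob_ev_0: "prob_ev N lam p 0 E = (if E (\<lambda>_. undefined) then 1 else 0)"
  by (simp add: prob_ev_def omega_def weight_def)

lemma prob_ev_Suc:
  "prob_ev N lam p (Suc t) E =
     (\<Sum>v\<in>{1..N} \<rightarrow>\<^sub>E UNIV. (\<Prod>j\<in>{1..N}. node_weight lam p j (v j)) *
        prob_ev N lam p t (\<lambda>w. E (extend_config t w v)))"
proof -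
  have "prob_ev N lam p (Suc t) E =
      (\<Sum>(w, v)\<in>omega N t \<times> ({1..N} \<rightarrow>\<^sub>E UNIV).
         if E (extend_config t w v) then weight N lam p (Suc t) (extend_config t w v) else 0)"
    unfolding prob_ev_def
    by (rule sum.reindex_bij_witness[symmetric,
          of _ "\<lambda>w'. (restrict w' ({..<t} \<times> {1..N}), restrict (\<lambda>j. w' (t, j)) {1..N})"
          "\<lambda>(w, v). extend_config t w v"])
       (auto simp: omega_def extend_config_def PiE_def extensional_def fun_eq_iff)
  also have "\<dots> = (\<Sum>(w, v)\<in>omega N t \<times> ({1..N} \<rightarrow>\<^sub>E UNIV).
      (\<Prod>j\<in>{1..N}. node_weight lam p j (v j)) * (if E (extend_config t w v) then weight N lam p t w else 0))"
    by (intro sum.cong refl) (auto simp: weight_extend_config)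
  also have "\<dots> = (\<Sum>v\<in>{1..N} \<rightarrow>\<^sub>E UNIV. \<Sum>w\<in>omega N t.
      (\<Prod>j\<in>{1..N}. node_weight lam p j (v j)) * (if E (extend_config t w v) then weight N lam p t w else 0))"
    unfolding sum.cartesian_product[symmetric] by (rule sum.swap)
  finally show ?thesis
    by (simp add: prob_ev_def sum_distrib_left)
qed

lemma prob_ev_Suc_factor:
  assumes "i \<in> {1..N}"
    and num: "\<And>v a b. prob_ev N lam p t (\<lambda>w. E (extend_config t w (v(i := (a, b))))) = f a * g v b"
    and den: "\<And>v a b. prob_ev N lam p t (\<lambda>w. E' (extend_config t w (v(i := (a, b))))) = g v b"
  shows "prob_ev N lam p (Suc t) E =
    (lam i * f True + (1 - lam i) * f False) * prob_ev N lam p (Suc t) E'"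
proof -
  let ?c = "lam i * f True + (1 - lam i) * f False"
  let ?others = "({1..N} - {i}) \<rightarrow>\<^sub>E (UNIV :: (bool \<times> bool) set)"
  let ?wt = "\<lambda>v. \<Prod>j\<in>{1..N} - {i}. node_weight lam p j (v j)"
  have num': "prob_ev N lam p t (\<lambda>w. E (extend_config t w (v(i := ab)))) = f (fst ab) * g v (snd ab)"
    and den': "prob_ev N lam p t (\<lambda>w. E' (extend_config t w (v(i := ab)))) = g v (snd ab)" for v ab
    using num[of v "fst ab" "snd ab"] den[of v "fst ab" "snd ab"] by simp_all
  have inner: "(\<Sum>ab\<in>UNIV. node_weight lam p i ab * prob_ev N lam p t (\<lambda>w. E (extend_config t w (v(i := ab))))) =
      ?c * (\<Sum>ab\<in>UNIV. node_weight lam p i ab * prob_ev N lam p t (\<lambda>w. E' (extend_config t w (v(i := ab)))))"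
    for v
    using node_weight_sum[of lam p i f "g v"] node_weight_sum[of lam p i "\<lambda>_. 1" "g v"]
    by (simp add: num' den')
  have split: "prob_ev N lam p (Suc t) E'' = (\<Sum>v\<in>?others. ?wt v * (\<Sum>ab\<in>UNIV.
      node_weight lam p i ab * prob_ev N lam p t (\<lambda>w. E'' (extend_config t w (v(i := ab))))))" for E''
    unfolding prob_ev_Suc by (rule sum_PiE_remove[OF assms(1) finite_atLeastAtMost])
  show ?thesis
    unfolding split by (simp add: inner sum_distrib_left mult_ac)
qed

lemma prob_ev_const_conj:
  "prob_ev N lam p t (\<lambda>w. c \<and> E w) = (if c then 1 else 0) * prob_ev N lam p t E"
  by (simp add: prob_ev_def)

lemma prob_ev_pos:
  assumes "\<forall>j\<in>{1..N}. 0 \<le> lam j \<and> lam j \<le> 1" "\<forall>j\<in>{1..N}. 0 \<le> p j \<and> p j \<le> 1"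
    and "w \<in> omega N t" "0 < weight N lam p t w" "E w"
  shows "0 < prob_ev N lam p t E"
proof -
  have weight_nonneg: "0 \<le> weight N lam p t w'" for w'
    using assms(1,2) unfolding weight_def by (intro prod_nonneg mult_nonneg_nonneg) auto
  have "weight N lam p t w = (if E w then weight N lam p t w else 0)"
    using assms(5) by simp
  also have "\<dots> \<le> prob_ev N lam p t E"
    unfolding prob_ev_def using assms(3) weight_nonneg
    by (intro member_le_sum) (auto simp: omega_def finite_PiE)
  finally show ?thesis
    using assms(4) by linarith
qed

lemma dloc_pos: "1 \<le> dloc w j t"
  by (induction t) auto

lemma extend_config_less: "s < t \<Longrightarrow> extend_config t w v (s, j) = w (s, j)"
  by (simp add: extend_config_def)

lemma extend_config_last: "extend_config t w v (t, j) = v j"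
  by (simp add: extend_config_def)

lemma dloc_extend_config_le: "r \<le> t \<Longrightarrow> dloc (extend_config t w v) j r = dloc w j r"
  by (induction r) (auto simp: extend_config_less)

lemma hist_extend_config_le: "r \<le> t \<Longrightarrow> hist pol (extend_config t w v) r = hist pol w r"
  by (induction r) (auto simp: extend_config_less dloc_extend_config_le Let_def split: option.split)

lemma dloc_extend_config:
  "dloc (extend_config t w v) j (Suc t) = (if fst (v j) then 1 else Suc (dloc w j t))"
  by (simp add: dloc_extend_config_le extend_config_last)

definition slot_obs :: "nat option \<Rightarrow> (nat \<Rightarrow> bool \<times> bool) \<Rightarrow> (nat \<Rightarrow> nat) \<Rightarrow> nat option" where
  "slot_obs u v a = (case u of None \<Rightarrow> None | Some j \<Rightarrow> if snd (v j) then Some (a j) else None)"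

definition next_ages :: "(nat \<Rightarrow> bool \<times> bool) \<Rightarrow> (nat \<Rightarrow> nat) \<Rightarrow> nat \<Rightarrow> nat" where
  "next_ages v a = (\<lambda>j. if fst (v j) then 1 else Suc (a j))"

definition other_ages :: "config \<Rightarrow> nat \<Rightarrow> nat \<Rightarrow> nat \<Rightarrow> nat" where
  "other_ages w i t = (\<lambda>j. dloc w j t)(i := 0)"

lemma hist_extend_config_eq_snoc:
  "hist pol (extend_config t w v) (Suc t) = h @ [(u, obs)] \<longleftrightarrow>
     hist pol w t = h \<and> pol h = u \<and> obs = slot_obs u v (\<lambda>j. dloc w j t)"
  by (auto simp: Let_def hist_extend_config_le dloc_extend_config_le slot_obs_def extend_config_last
      split: option.split)

lemma other_ages_extend_config:
  "other_ages (extend_config t w v) i (Suc t) = (next_ages v (other_ages w i t))(i := 0)"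
  by (simp add: other_ages_def next_ages_def dloc_extend_config fun_eq_iff del: dloc.simps)

lemma next_ages_fun_upd: "(next_ages (v(i := ab)) a)(i := z) = (next_ages v a)(i := z)"
  by (simp add: next_ages_def fun_eq_iff)

lemma slot_obs_fun_upd_fst: "slot_obs u (v(i := (a, b))) c = slot_obs u (v(i := (a', b))) c"
  by (simp add: slot_obs_def split: option.split)

lemma slot_obs_unobserved:
  "\<not> (u = Some i \<and> obs \<noteq> None) \<Longrightarrow> (obs = slot_obs u v (a(i := z))) = (obs = slot_obs u v a)"
  by (cases u) (auto simp: slot_obs_def)

section \<open>The sufficient statistic of the history\<close>

text \<open>The pair (k, m) of the statement: the local age of node i at its last successful
  observation (initially the known age 1) and the number of slots since then. An observed age is
  always at least 1; clamping it with max makes 1 \<le> k hold for every history, not only for the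
  reachable ones.\<close>

definition age_stat_step :: "nat \<Rightarrow> nat \<times> nat \<Rightarrow> nat option \<times> nat option \<Rightarrow> nat \<times> nat" where
  "age_stat_step i km e =
     (if fst e = Some i \<and> snd e \<noteq> None then (max (the (snd e)) 1, 1) else (fst km, Suc (snd km)))"

definition age_stat :: "nat \<Rightarrow> history \<Rightarrow> nat \<times> nat" where
  "age_stat i h = foldl (age_stat_step i) (1, 0) h"

lemma age_stat_Nil [simp]: "age_stat i [] = (1, 0)"
  by (simp add: age_stat_def)

lemma age_stat_snoc [simp]: "age_stat i (h @ [e]) = age_stat_step i (age_stat i h) e"
  by (simp add: age_stat_def)

lemma age_stat_fst_pos: "1 \<le> fst (age_stat i h)"
  by (induction h rule: rev_induct) (auto simp: age_stat_step_def)

lemma age_stat_snd_pos: "h \<noteq> [] \<Longrightarrow> 1 \<le> snd (age_stat i h)"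
  by (cases h rule: rev_exhaust) (auto simp: age_stat_step_def)

lemma Dap_eq_age_stat:
  "Dap pol w i t = fst (age_stat i (hist pol w t)) + snd (age_stat i (hist pol w t))"
proof (induction t)
  case (Suc t)
  have "max (dloc w i t) 1 = dloc w i t"
    using dloc_pos by (rule max_absorb1)
  with Suc.IH show ?case
    by (auto simp: Let_def age_stat_step_def split: option.split)
qed simp

section \<open>The belief invariant\<close>

lemma cvec_0: "cvec lam i k 0 d = (if d = k then 1 else 0)"
  by (simp add: cvec_def)

lemma cvec_Suc:
  assumes "1 \<le> k"
  shows "cvec lam i k (Suc m) d =
    lam i * (if d = 1 then 1 else 0) + (1 - lam i) * (if d = 0 then 0 else cvec lam i k m (d - 1))"
proof (cases d)
  case (Suc e)
  then show ?thesis
    using assms by (cases e) (auto simp: cvec_def)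
qed (simp add: cvec_def)

text \<open>Q ranges over events about the ages of the other nodes: the policy reacts to their
  observations, so the induction has to carry the conditional independence of node i's age from
  them given the history.\<close>

definition belief_factorizes ::
    "nat \<Rightarrow> (nat \<Rightarrow> real) \<Rightarrow> (nat \<Rightarrow> real) \<Rightarrow> policy \<Rightarrow> nat \<Rightarrow> nat \<Rightarrow> bool" where
  "belief_factorizes N lam p pol i t \<longleftrightarrow>
     (\<forall>h Q d. prob_ev N lam p t (\<lambda>w. dloc w i t = d \<and> hist pol w t = h \<and> Q (other_ages w i t)) =
        cvec lam i (fst (age_stat i h)) (snd (age_stat i h)) d *
        prob_ev N lam p t (\<lambda>w. hist pol w t = h \<and> Q (other_ages w i t)))"

lemma belief_factorizes_0: "belief_factorizes N lam p pol i 0"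
  by (simp add: belief_factorizes_def prob_ev_0 cvec_0)

lemma prob_ev_observed:
  assumes "i \<in> {1..N}"
  shows "prob_ev N lam p (Suc t)
      (\<lambda>w. dloc w i (Suc t) = d \<and> hist pol w (Suc t) = h @ [(Some i, Some x)] \<and> Q (other_ages w i (Suc t))) =
    cvec lam i (max x 1) 1 d *
    prob_ev N lam p (Suc t) (\<lambda>w. hist pol w (Suc t) = h @ [(Some i, Some x)] \<and> Q (other_ages w i (Suc t)))"
proof -
  define Y where "Y v = prob_ev N lam p t
      (\<lambda>w. dloc w i t = x \<and> hist pol w t = h \<and> Q ((next_ages v (other_ages w i t))(i := 0)))" for v
  define f where "f a = (if a then (if d = 1 then 1 else 0)
      else if d = 0 then 0 else cvec lam i (max x 1) 0 (d - 1))" for a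
  have event: "(hist pol (extend_config t w (v(i := (a, b)))) (Suc t) = h @ [(Some i, Some x)] \<and>
      Q (other_ages (extend_config t w (v(i := (a, b)))) i (Suc t))) \<longleftrightarrow>
      pol h = Some i \<and> b \<and> dloc w i t = x \<and> hist pol w t = h \<and> Q ((next_ages v (other_ages w i t))(i := 0))"
    for w v a b
    unfolding hist_extend_config_eq_snoc other_ages_extend_config next_ages_fun_upd
    by (auto simp: slot_obs_def)
  have den: "prob_ev N lam p t (\<lambda>w. hist pol (extend_config t w (v(i := (a, b)))) (Suc t) = h @ [(Some i, Some x)] \<and>
      Q (other_ages (extend_config t w (v(i := (a, b)))) i (Suc t))) =
      (if pol h = Some i then 1 else 0) * ((if b then 1 else 0) * Y v)" for v a b
    unfolding event prob_ev_const_conj Y_def ..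
  have num: "prob_ev N lam p t (\<lambda>w. dloc (extend_config t w (v(i := (a, b)))) i (Suc t) = d \<and>
      hist pol (extend_config t w (v(i := (a, b)))) (Suc t) = h @ [(Some i, Some x)] \<and>
      Q (other_ages (extend_config t w (v(i := (a, b)))) i (Suc t))) =
      f a * ((if pol h = Some i then 1 else 0) * ((if b then 1 else 0) * Y v))" for v a b
  proof (cases "x = 0")
    case True
    have no_zero: "(dloc w i t = 0) = False" for w
      using dloc_pos by (metis not_one_le_zero)
    show ?thesis
      unfolding event unfolding True Y_def no_zero simp_thms by (simp add: prob_ev_def)
  next
    case False
    have "prob_ev N lam p t (\<lambda>w. dloc (extend_config t w (v(i := (a, b)))) i (Suc t) = d \<and>
        hist pol (extend_config t w (v(i := (a, b)))) (Suc t) = h @ [(Some i, Some x)] \<and>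
        Q (other_ages (extend_config t w (v(i := (a, b)))) i (Suc t))) =
      prob_ev N lam p t (\<lambda>w. (if a then d = 1 else d = Suc x) \<and> pol h = Some i \<and> b \<and>
        dloc w i t = x \<and> hist pol w t = h \<and> Q ((next_ages v (other_ages w i t))(i := 0)))"
      unfolding dloc_extend_config event by (intro arg_cong[where f = "prob_ev N lam p t"] ext) auto
    also have "\<dots> = (if (if a then d = 1 else d = Suc x) then 1 else 0) *
        ((if pol h = Some i then 1 else 0) * ((if b then 1 else 0) * Y v))"
      unfolding prob_ev_const_conj Y_def ..
    also have "\<dots> = f a * ((if pol h = Some i then 1 else 0) * ((if b then 1 else 0) * Y v))"
      using False by (auto simp: f_def cvec_0)
    finally show ?thesis .
  qed
  have "lam i * f True + (1 - lam i) * f False = cvec lam i (max x 1) 1 d"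
    by (simp add: f_def cvec_Suc)
  with prob_ev_Suc_factor[OF assms num den] show ?thesis
    by simp
qed

lemma prob_ev_unobserved:
  assumes IH: "belief_factorizes N lam p pol i t" and "i \<in> {1..N}"
    and unobserved: "\<not> (u = Some i \<and> obs \<noteq> None)"
  shows "prob_ev N lam p (Suc t)
      (\<lambda>w. dloc w i (Suc t) = d \<and> hist pol w (Suc t) = h @ [(u, obs)] \<and> Q (other_ages w i (Suc t))) =
    cvec lam i (fst (age_stat i h)) (Suc (snd (age_stat i h))) d *
    prob_ev N lam p (Suc t) (\<lambda>w. hist pol w (Suc t) = h @ [(u, obs)] \<and> Q (other_ages w i (Suc t)))"
proof -
  obtain k m where km: "age_stat i h = (k, m)"
    by force
  define R where "R v b c \<longleftrightarrow> obs = slot_obs u (v(i := (True, b))) c \<and> Q ((next_ages v c)(i := 0))"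
    for v b c
  define P where "P v b = prob_ev N lam p t (\<lambda>w. hist pol w t = h \<and> R v b (other_ages w i t))" for v b
  define f where "f a = (if a then (if d = 1 then 1 else 0)
      else if d = 0 then 0 else cvec lam i k m (d - 1))" for a
  have event: "(hist pol (extend_config t w (v(i := (a, b)))) (Suc t) = h @ [(u, obs)] \<and>
      Q (other_ages (extend_config t w (v(i := (a, b)))) i (Suc t))) \<longleftrightarrow>
      pol h = u \<and> hist pol w t = h \<and> R v b (other_ages w i t)" for w v a b
  proof -
    have "slot_obs u (v(i := (a, b))) (\<lambda>j. dloc w j t) = slot_obs u (v(i := (True, b))) (\<lambda>j. dloc w j t)"
      by (rule slot_obs_fun_upd_fst)
    then show ?thesis
      unfolding hist_extend_config_eq_snoc other_ages_extend_config next_ages_fun_upd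
      unfolding R_def other_ages_def slot_obs_unobserved[OF unobserved]
      by auto
  qed
  have den: "prob_ev N lam p t (\<lambda>w. hist pol (extend_config t w (v(i := (a, b)))) (Suc t) = h @ [(u, obs)] \<and>
      Q (other_ages (extend_config t w (v(i := (a, b)))) i (Suc t))) = (if pol h = u then 1 else 0) * P v b"
    for v a b
    unfolding event prob_ev_const_conj P_def ..
  have num: "prob_ev N lam p t (\<lambda>w. dloc (extend_config t w (v(i := (a, b)))) i (Suc t) = d \<and>
      hist pol (extend_config t w (v(i := (a, b)))) (Suc t) = h @ [(u, obs)] \<and>
      Q (other_ages (extend_config t w (v(i := (a, b)))) i (Suc t))) =
      f a * ((if pol h = u then 1 else 0) * P v b)" for v a b
  proof (cases "\<not> a \<and> d \<noteq> 0")
    case True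
    then obtain e where e: "\<not> a" "d = Suc e"
      using not0_implies_Suc by blast
    have "prob_ev N lam p t (\<lambda>w. dloc w i t = e \<and> hist pol w t = h \<and> R v b (other_ages w i t)) =
        cvec lam i k m e * P v b"
      using IH km by (simp add: belief_factorizes_def P_def)
    then show ?thesis
      unfolding dloc_extend_config event using e
      by (simp add: prob_ev_const_conj f_def conj_left_commute)
  next
    case False
    then show ?thesis
      unfolding dloc_extend_config event by (auto simp: prob_ev_const_conj f_def P_def prob_ev_def)
  qed
  have "lam i * f True + (1 - lam i) * f False = cvec lam i k (Suc m) d"
    using age_stat_fst_pos[of i h] km by (simp add: f_def cvec_Suc)
  with prob_ev_Suc_factor[OF assms(2) num den] km show ?thesis
    by simp
qed

lemma belief_factorizes_Suc:
  assumes "belief_factorizes N lam p pol i t" "i \<in> {1..N}"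
  shows "belief_factorizes N lam p pol i (Suc t)"
  unfolding belief_factorizes_def
proof (intro allI)
  fix h' Q d
  show "prob_ev N lam p (Suc t) (\<lambda>w. dloc w i (Suc t) = d \<and> hist pol w (Suc t) = h' \<and> Q (other_ages w i (Suc t))) =
      cvec lam i (fst (age_stat i h')) (snd (age_stat i h')) d *
      prob_ev N lam p (Suc t) (\<lambda>w. hist pol w (Suc t) = h' \<and> Q (other_ages w i (Suc t)))"
  proof (cases h' rule: rev_exhaust)
    case Nil
    then show ?thesis
      by (simp add: Let_def prob_ev_def)
  next
    case (snoc h e)
    obtain u obs where e: "e = (u, obs)"
      by force
    show ?thesis
    proof (cases "u = Some i \<and> obs \<noteq> None")
      case True
      then obtain x where x: "u = Some i" "obs = Some x"
        by auto
      have stat: "age_stat i (h @ [(Some i, Some x)]) = (max x 1, 1)"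
        by (simp add: age_stat_step_def)
      show ?thesis
        unfolding snoc e x stat fst_conv snd_conv by (rule prob_ev_observed[OF assms(2)])
    next
      case False
      then have stat: "age_stat i (h @ [(u, obs)]) = (fst (age_stat i h), Suc (snd (age_stat i h)))"
        by (auto simp: age_stat_step_def)
      show ?thesis
        unfolding snoc e stat fst_conv snd_conv by (rule prob_ev_unobserved[OF assms False])
    qed
  qed
qed

lemma belief_factorizes_always: "i \<in> {1..N} \<Longrightarrow> belief_factorizes N lam p pol i t"
  by (induction t) (simp_all add: belief_factorizes_0 belief_factorizes_Suc)

lemma belief_eq_cvec_age_stat:
  assumes "i \<in> {1..N}" and "0 < prob_ev N lam p t (\<lambda>w. hist pol w t = h)"
  shows "belief N lam p pol t i h d = cvec lam i (fst (age_stat i h)) (snd (age_stat i h)) d"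
  using belief_factorizes_always[OF assms(1), of lam p pol t, unfolded belief_factorizes_def,
      rule_format, where h = h and Q = "\<lambda>_. True" and d = d] assms(2)
  by (simp add: belief_def)

theorem corollary1:
  fixes N :: nat and lam p :: "nat \<Rightarrow> real" and pol :: policy
    and t i :: nat and w0 :: config
  assumes "\<forall>j\<in>{1..N}. 0 < lam j \<and> lam j \<le> 1"
    and "\<forall>j\<in>{1..N}. 0 < p j \<and> p j \<le> 1"
    and "\<forall>h. pol h = None \<or> (\<exists>j\<in>{1..N}. pol h = Some j)"
    and "t \<ge> 1" and "i \<in> {1..N}"
    and "w0 \<in> omega N t" and "weight N lam p t w0 > 0"
  shows "\<exists>k m :: nat. k > 0 \<and> m > 0 \<and> Dap pol w0 i t = k + m \<and>
           (\<forall>d \<ge> 1. belief N lam p pol t i (hist pol w0 t) d = cvec lam i k m d)"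
proof -
  define h where "h = hist pol w0 t"
  obtain k m where km: "age_stat i h = (k, m)"
    by force
  have "0 < k"
    using age_stat_fst_pos[of i h] km by simp
  moreover have "h \<noteq> []"
    using \<open>t \<ge> 1\<close> by (cases t) (simp_all add: h_def Let_def)
  then have "0 < m"
    using age_stat_snd_pos[of h i] km by simp
  moreover have "Dap pol w0 i t = k + m"
    using Dap_eq_age_stat[of pol w0 i t] km by (simp add: h_def)
  moreover have "0 < prob_ev N lam p t (\<lambda>w. hist pol w t = h)"
    using assms(1,2,6,7) by (intro prob_ev_pos[where w = w0]) (auto simp: h_def)
  then have "belief N lam p pol t i h d = cvec lam i k m d" for d
    using belief_eq_cvec_age_stat[OF \<open>i \<in> {1..N}\<close>] km by simp
  ultimately show ?thesis
    unfolding h_def by blast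
qed

end
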